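(* Let $H$ be any graph obtained from $E_{20}$ by splitting a vertex. Then $H$ contains $K_{3,4}$ or $F_4$ as a minor.
   Context: $E_{20}$ is the graph with vertex set $\{e^0,e^1_1,e^1_2,e^1_3,e^2,e^3_1,e^3_2,e^3_3,e^4\}$ and the 16 edges $e^0e^2$; $e^0e^1_i$ ($i=1,2,3$); $e^1_1e^1_2$, $e^1_2e^1_3$, $e^1_3e^1_1$; and, for $i=1,2,3$, $e^1_ie^3_i$, $e^2e^3_i$, $e^4e^3_i$. $F_4$ is the graph with vertex set $\{f^1,f^2\}\cup\{f^i_j: i\in\{1,2\}, j\in\{1,2,3,4\}\}$ and the 16 edges: for each $i\in\{1,2\}$, $f^if^i_1$, $f^if^i_2$, $f^if^i_4$, $f^i_3f^i_1$, $f^i_3f^i_2$, $f^i_3f^i_4$; and $f^1_jf^2_{5-j}$ for $j=1,2,3,4$. Splitting a vertex $v$ of a graph $H$ means: delete $v$, add two new adjacent vertices $v_1,v_2$, and join each neighbour of $v$ to exactly one of $v_1,v_2$, so that each of $v_1,v_2$ is joined to at least two neighbours of $v$. *)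

theory Defs
  imports Main
begin

type_synonym 'a sgraph = "'a set \<times> 'a set set"

definition verts :: "'a sgraph \<Rightarrow> 'a set" where "verts G = fst G"
definition edges :: "'a sgraph \<Rightarrow> 'a set set" where "edges G = snd G"

definition simple_graph :: "'a sgraph \<Rightarrow> bool" where
  "simple_graph G \<longleftrightarrow> finite (verts G) \<and>
     (\<forall>e\<in>edges G. \<exists>u v. u \<noteq> v \<and> e = {u, v} \<and> u \<in> verts G \<and> v \<in> verts G)"

definition nbrs :: "'a sgraph \<Rightarrow> 'a \<Rightarrow> 'a set" where
  "nbrs G v = {u \<in> verts G. {u, v} \<in> edges G}"

definition connected_set :: "'a sgraph \<Rightarrow> 'a set \<Rightarrow> bool" where
  "connected_set G S \<longleftrightarrow> S \<noteq> {} \<and> S \<subseteq> verts G \<and>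
     (\<forall>u\<in>S. \<forall>v\<in>S. (u, v) \<in> {(x, y). x \<in> S \<and> y \<in> S \<and> {x, y} \<in> edges G}\<^sup>*)"

definition is_minor :: "'b sgraph \<Rightarrow> 'a sgraph \<Rightarrow> bool" where
  "is_minor M G \<longleftrightarrow> (\<exists>\<phi> :: 'b \<Rightarrow> 'a set.
     (\<forall>x\<in>verts M. connected_set G (\<phi> x)) \<and>
     (\<forall>x\<in>verts M. \<forall>y\<in>verts M. x \<noteq> y \<longrightarrow> \<phi> x \<inter> \<phi> y = {}) \<and>
     (\<forall>x\<in>verts M. \<forall>y\<in>verts M. {x, y} \<in> edges M \<longrightarrow>
         (\<exists>u\<in>\<phi> x. \<exists>w\<in>\<phi> y. {u, w} \<in> edges G)))"

text \<open>Splitting vertex v of G: the old vertices are Inl x (x \<noteq> v), the two new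
  adjacent vertices are Inr False (= v_1) and Inr True (= v_2); the neighbours of v
  in A are joined to v_1, the remaining neighbours of v to v_2.\<close>
definition split_vertex :: "'a sgraph \<Rightarrow> 'a \<Rightarrow> 'a set \<Rightarrow> ('a + bool) sgraph" where
  "split_vertex G v A =
     (Inl ` (verts G - {v}) \<union> {Inr False, Inr True},
      {{Inl x, Inl y} | x y. {x, y} \<in> edges G \<and> x \<noteq> v \<and> y \<noteq> v}
      \<union> {{Inr False, Inr True}}
      \<union> {{Inl u, Inr False} | u. u \<in> A}
      \<union> {{Inl u, Inr True} | u. u \<in> nbrs G v - A})"

definition valid_split :: "'a sgraph \<Rightarrow> 'a \<Rightarrow> 'a set \<Rightarrow> bool" where
  "valid_split G v A \<longleftrightarrow> v \<in> verts G \<and> A \<subseteq> nbrs G v \<and>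
     card A \<ge> 2 \<and> card (nbrs G v - A) \<ge> 2"

datatype evert = e0 | e1 nat | e2 | e3 nat | e4

definition E20 :: "evert sgraph" where
  "E20 = ({e0, e2, e4} \<union> e1 ` {1, 2, 3} \<union> e3 ` {1, 2, 3},
     {{e0, e2}} \<union> {{e0, e1 i} | i. i \<in> {1, 2, 3}}
     \<union> {{e1 1, e1 2}, {e1 2, e1 3}, {e1 3, e1 1}}
     \<union> {{e1 i, e3 i} | i. i \<in> {1, 2, 3}}
     \<union> {{e2, e3 i} | i. i \<in> {1, 2, 3}}
     \<union> {{e4, e3 i} | i. i \<in> {1, 2, 3}})"

text \<open>The graph F_4: f i is f^i, fj i j is f^i_j.\<close>
datatype fvert = f nat | fj nat nat

definition F4 :: "fvert sgraph" where
  "F4 = (f ` {1, 2} \<union> {fj i j | i j. i \<in> {1, 2} \<and> j \<in> {1, 2, 3, 4}},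
     {{f i, fj i 1} | i. i \<in> {1, 2}} \<union> {{f i, fj i 2} | i. i \<in> {1, 2}}
     \<union> {{f i, fj i 4} | i. i \<in> {1, 2}} \<union> {{fj i 3, fj i 1} | i. i \<in> {1, 2}}
     \<union> {{fj i 3, fj i 2} | i. i \<in> {1, 2}} \<union> {{fj i 3, fj i 4} | i. i \<in> {1, 2}}
     \<union> {{fj 1 j, fj 2 (5 - j)} | j. j \<in> {1, 2, 3, 4}})"

definition K34 :: "(nat + nat) sgraph" where
  "K34 = (Inl ` {0..<3} \<union> Inr ` {0..<4},
     {{Inl i, Inr j} | i j. i < 3 \<and> j < 4})"

end

theory Submission
  imports Defs "HOL-Combinatorics.Transposition"
begin

text \<open>Only \<open>e0\<close>, \<open>e2\<close> and the \<open>e1 i\<close> have degree four; every other vertex of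
  E20 has degree three and admits no split. Permuting the indices 1, 2, 3 is an automorphism of
  E20, and exchanging the two sides of a split gives an isomorphic graph. Since minors are
  invariant under isomorphism, the thirty possible splits reduce to four: \<open>e0\<close> with
  \<open>{e2, e1 1}\<close>, \<open>e1 1\<close> with \<open>{e0, e1 2}\<close> or \<open>{e0, e3 1}\<close>, and \<open>e2\<close> with
  \<open>{e0, e3 1}\<close>. For each of them an explicit model of F4 or K34 is checked.\<close>

section \<open>Relabelling graphs\<close>

definition relabel :: "('a \<Rightarrow> 'b) \<Rightarrow> 'a sgraph \<Rightarrow> 'b sgraph" where
  "relabel h G = (h ` verts G, (`) h ` edges G)"

lemma verts_relabel [simp]: "verts (relabel h G) = h ` verts G"
  by (simp add: relabel_def verts_def)

lemma edges_relabel [simp]: "edges (relabel h G) = (`) h ` edges G"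
  by (simp add: relabel_def edges_def)

lemma sgraph_eqI: "verts G = verts H \<Longrightarrow> edges G = edges H \<Longrightarrow> G = H"
  by (simp add: verts_def edges_def prod_eq_iff)

lemma involution_image_eq:
  assumes "\<And>x. g (g x) = x" and "g ` S \<subseteq> S"
  shows "g ` S = S"
proof
  have "S = g ` g ` S"
    by (simp add: image_image assms(1))
  also have "\<dots> \<subseteq> g ` S"
    using assms(2) by (rule image_mono)
  finally show "S \<subseteq> g ` S" .
qed (fact assms(2))

lemma relabel_involution_eq:
  assumes "\<And>x. h (h x) = x"
    and "\<And>x. x \<in> verts G \<Longrightarrow> h x \<in> verts G"
    and "\<And>e. e \<in> edges G \<Longrightarrow> h ` e \<in> edges G"
  shows "relabel h G = G"
proof (rule sgraph_eqI)
  show "verts (relabel h G) = verts G"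
    using involution_image_eq[of h "verts G"] assms(1,2) by auto
  have "h ` h ` e = e" for e
    by (simp add: image_image assms(1))
  then show "edges (relabel h G) = edges G"
    using involution_image_eq[of "(`) h" "edges G"] assms(3) by auto
qed

lemma doubleton_in_edges_relabel:
  assumes "{x, y} \<in> edges G"
  shows "{h x, h y} \<in> edges (relabel h G)"
  unfolding edges_relabel by (rule image_eqI[where x = "{x, y}"]) (simp_all add: assms)

lemma connected_set_relabel:
  assumes "connected_set G S"
  shows "connected_set (relabel h G) (h ` S)"
proof -
  let ?R = "\<lambda>G S. {(x, y). x \<in> S \<and> y \<in> S \<and> {x, y} \<in> edges G}"
  have "(h x, h y) \<in> (?R (relabel h G) (h ` S))\<^sup>*" if "(x, y) \<in> (?R G S)\<^sup>*" for x y
    using that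
  proof (induction rule: rtrancl_induct)
    case (step y z)
    then have "(h y, h z) \<in> ?R (relabel h G) (h ` S)"
      using doubleton_in_edges_relabel[of y z G h] by auto
    with step.IH show ?case by (rule rtrancl_into_rtrancl)
  qed simp
  with assms show ?thesis
    unfolding connected_set_def by (auto simp: image_mono)
qed

lemma is_minor_relabel:
  assumes "inj_on h (verts G)" and "is_minor M G"
  shows "is_minor M (relabel h G)"
proof -
  from assms(2) obtain \<phi> where
    conn: "\<forall>x\<in>verts M. connected_set G (\<phi> x)" and
    disj: "\<forall>x\<in>verts M. \<forall>y\<in>verts M. x \<noteq> y \<longrightarrow> \<phi> x \<inter> \<phi> y = {}" and
    adj: "\<forall>x\<in>verts M. \<forall>y\<in>verts M. {x, y} \<in> edges M \<longrightarrow>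
      (\<exists>u\<in>\<phi> x. \<exists>w\<in>\<phi> y. {u, w} \<in> edges G)"
    unfolding is_minor_def by blast
  have sub: "\<phi> x \<subseteq> verts G" if "x \<in> verts M" for x
    using conn that by (simp add: connected_set_def)
  show ?thesis
    unfolding is_minor_def
  proof (intro exI[of _ "\<lambda>x. h ` \<phi> x"] conjI ballI impI)
    fix x assume "x \<in> verts M"
    then show "connected_set (relabel h G) (h ` \<phi> x)"
      using conn connected_set_relabel by blast
  next
    fix x y assume "x \<in> verts M" "y \<in> verts M" "x \<noteq> y"
    then have "h ` \<phi> x \<inter> h ` \<phi> y = h ` (\<phi> x \<inter> \<phi> y)"
      using inj_on_image_Int[OF assms(1) sub sub] by simp
    with \<open>x \<in> verts M\<close> \<open>y \<in> verts M\<close> \<open>x \<noteq> y\<close> show "h ` \<phi> x \<inter> h ` \<phi> y = {}"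
      using disj by simp
  next
    fix x y assume "x \<in> verts M" "y \<in> verts M" "{x, y} \<in> edges M"
    then show "\<exists>u\<in>h ` \<phi> x. \<exists>w\<in>h ` \<phi> y. {u, w} \<in> edges (relabel h G)"
      using adj doubleton_in_edges_relabel by fast
  qed
qed

lemma nbrs_relabel:
  assumes "inj h"
  shows "nbrs (relabel h G) (h v) = h ` nbrs G v"
proof -
  have "inj ((`) h)"
    using assms by (simp add: inj_on_image)
  then have "{h u, h v} \<in> (`) h ` edges G \<longleftrightarrow> {u, v} \<in> edges G" for u
    using inj_image_mem_iff[of "(`) h" "{u, v}"] by simp
  then show ?thesis
    by (auto simp: nbrs_def)
qed

section \<open>Splitting a vertex\<close>

lemma valid_split_relabel:
  assumes "inj h" and "valid_split G v A"
  shows "valid_split (relabel h G) (h v) (h ` A)"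
proof -
  have "h ` nbrs G v - h ` A = h ` (nbrs G v - A)"
    using assms(1) by (simp add: image_set_diff)
  with assms show ?thesis
    unfolding valid_split_def nbrs_relabel[OF assms(1)]
    by (auto simp: card_image inj_on_subset[OF assms(1)])
qed

lemma verts_split_vertex:
  "verts (split_vertex G v A) = Inl ` (verts G - {v}) \<union> {Inr False, Inr True}"
  by (simp add: split_vertex_def verts_def)

lemma edges_split_vertex:
  "edges (split_vertex G v A) =
     {{Inl x, Inl y} | x y. {x, y} \<in> edges G \<and> x \<noteq> v \<and> y \<noteq> v}
     \<union> {{Inr False, Inr True}}
     \<union> {{Inl u, Inr False} | u. u \<in> A}
     \<union> {{Inl u, Inr True} | u. u \<in> nbrs G v - A}"
  by (simp add: split_vertex_def edges_def)

lemma verts_split_vertex_iff [simp]: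
  "Inl x \<in> verts (split_vertex G v A) \<longleftrightarrow> x \<in> verts G \<and> x \<noteq> v"
  "Inr b \<in> verts (split_vertex G v A)"
  by (auto simp: verts_split_vertex)

lemma edges_split_vertex_iff [simp]:
  "{Inl x, Inl y} \<in> edges (split_vertex G v A) \<longleftrightarrow> {x, y} \<in> edges G \<and> x \<noteq> v \<and> y \<noteq> v"
  "{Inl x, Inr False} \<in> edges (split_vertex G v A) \<longleftrightarrow> x \<in> A"
  "{Inr False, Inl x} \<in> edges (split_vertex G v A) \<longleftrightarrow> x \<in> A"
  "{Inl x, Inr True} \<in> edges (split_vertex G v A) \<longleftrightarrow> x \<in> nbrs G v - A"
  "{Inr True, Inl x} \<in> edges (split_vertex G v A) \<longleftrightarrow> x \<in> nbrs G v - A"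
  "{Inr b, Inr c} \<in> edges (split_vertex G v A) \<longleftrightarrow> b \<noteq> c"
  by (auto simp: edges_split_vertex doubleton_eq_iff insert_commute)

lemma doubleton_eq_image_iff:
  assumes "inj h"
  shows "{x', y'} = h ` e \<longleftrightarrow> (\<exists>x y. e = {x, y} \<and> x' = h x \<and> y' = h y)"
proof
  assume img: "{x', y'} = h ` e"
  then have "x' \<in> h ` e" "y' \<in> h ` e"
    by (simp_all flip: img)
  then obtain x y where x': "x' = h x" and y': "y' = h y"
    by blast
  have "h ` e = h ` {x, y}"
    unfolding img[symmetric] x' y' by simp
  then have "e = {x, y}"
    by (subst (asm) inj_image_eq_iff[OF assms])
  with x' y' show "\<exists>x y. e = {x, y} \<and> x' = h x \<and> y' = h y"
    by blast
qed auto

lemma doubleton_in_image_iff: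
  assumes "inj h"
  shows "{x', y'} \<in> (`) h ` E \<longleftrightarrow> (\<exists>x y. {x, y} \<in> E \<and> x' = h x \<and> y' = h y)"
  by (auto simp: doubleton_eq_image_iff[OF assms] image_iff)

lemma image_doubleton_Collect:
  "(`) g ` {{a x y, b x y} | x y. P x y} = {{g (a x y), g (b x y)} | x y. P x y}"
proof
  show "(`) g ` {{a x y, b x y} | x y. P x y} \<subseteq> {{g (a x y), g (b x y)} | x y. P x y}"
    by auto
next
  show "{{g (a x y), g (b x y)} | x y. P x y} \<subseteq> (`) g ` {{a x y, b x y} | x y. P x y}"
  proof
    fix z assume "z \<in> {{g (a x y), g (b x y)} | x y. P x y}"
    then obtain x y where "z = {g (a x y), g (b x y)}" and "P x y"
      by blast
    then show "z \<in> (`) g ` {{a x y, b x y} | x y. P x y}"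
      by (intro image_eqI[where x = "{a x y, b x y}"]) auto
  qed
qed

lemma image_map_sum_Inl_Inr_edges:
  "(`) (map_sum h g) ` {{Inl u, Inr b} | u. u \<in> B} = {{Inl u, Inr (g b)} | u. u \<in> h ` B}"
  by (simp add: Setcompr_eq_image image_image)

lemma split_vertex_relabel:
  assumes "inj h"
  shows "split_vertex (relabel h G) (h v) (h ` A) = relabel (map_sum h id) (split_vertex G v A)"
proof (rule sgraph_eqI)
  show "verts (split_vertex (relabel h G) (h v) (h ` A)) = verts (relabel (map_sum h id) (split_vertex G v A))"
    using assms by (auto simp: verts_split_vertex image_image inj_eq)
next
  let ?g = "map_sum h id"
  have old_edges: "(`) ?g ` {{Inl x, Inl y} | x y. {x, y} \<in> edges G \<and> x \<noteq> v \<and> y \<noteq> v} =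
      {{Inl x, Inl y} | x y. {x, y} \<in> (`) h ` edges G \<and> x \<noteq> h v \<and> y \<noteq> h v}"
    unfolding image_doubleton_Collect doubleton_in_image_iff[OF assms]
    using assms by (force simp: inj_eq)
  have "h ` nbrs G v - h ` A = h ` (nbrs G v - A)"
    using assms by (simp add: image_set_diff)
  then show "edges (split_vertex (relabel h G) (h v) (h ` A)) = edges (relabel ?g (split_vertex G v A))"
    unfolding edges_split_vertex edges_relabel image_Un old_edges image_map_sum_Inl_Inr_edges
      nbrs_relabel[OF assms]
    by simp
qed

lemma split_vertex_complement:
  assumes "A \<subseteq> nbrs G v"
  shows "split_vertex G v (nbrs G v - A) = relabel (map_sum id Not) (split_vertex G v A)"
proof (rule sgraph_eqI)
  show "verts (split_vertex G v (nbrs G v - A)) = verts (relabel (map_sum id Not) (split_vertex G v A))"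
    by (auto simp: verts_split_vertex image_image)
  show "edges (split_vertex G v (nbrs G v - A)) = edges (relabel (map_sum id Not) (split_vertex G v A))"
    unfolding edges_split_vertex edges_relabel image_Un image_doubleton_Collect
      image_map_sum_Inl_Inr_edges
    using assms by (simp add: double_diff insert_commute Un_ac)
qed

lemma is_minor_split_vertex_complement:
  assumes "A \<subseteq> nbrs G v" and "is_minor M (split_vertex G v A)"
  shows "is_minor M (split_vertex G v (nbrs G v - A))"
proof -
  have "inj (map_sum id Not)"
    by (intro sum.inj_map) (auto simp: inj_def)
  then have "is_minor M (relabel (map_sum id Not) (split_vertex G v A))"
    using assms(2) by (rule is_minor_relabel[OF inj_on_subset[OF _ subset_UNIV]])
  with assms(1) show ?thesis
    by (simp add: split_vertex_complement)
qed

lemma valid_split_card_nbrs: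
  assumes "valid_split G v A"
  shows "4 \<le> card (nbrs G v)"
proof -
  have sub: "A \<subseteq> nbrs G v" and two: "2 \<le> card A" "2 \<le> card (nbrs G v - A)"
    using assms by (auto simp: valid_split_def)
  have fin: "finite A" "finite (nbrs G v - A)"
    using two by (auto intro: card_ge_0_finite)
  have "nbrs G v = A \<union> (nbrs G v - A)"
    using sub by blast
  then have "card (nbrs G v) = card A + card (nbrs G v - A)"
    using fin by (metis Diff_disjoint card_Un_disjoint)
  with two show ?thesis
    by linarith
qed

lemma valid_split_degree_four_cases:
  assumes N: "nbrs G v = {a, b, c, d}" and "distinct [a, b, c, d]" and "valid_split G v A"
  obtains "A = {a, b}" | "A = {a, c}" | "A = {a, d}"
    | "A = nbrs G v - {a, b}" | "A = nbrs G v - {a, c}" | "A = nbrs G v - {a, d}"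
proof -
  have sub: "A \<subseteq> {a, b, c, d}" and fin: "finite A"
    and two: "2 \<le> card A" "2 \<le> card ({a, b, c, d} - A)"
    using assms by (auto simp: valid_split_def intro: finite_subset)
  have "card ({a, b, c, d} - A) = 4 - card A"
    using \<open>distinct [a, b, c, d]\<close> sub fin by (simp add: card_Diff_subset)
  with two have "card A = 2" by linarith
  then obtain x y where A: "A = {x, y}" "x \<noteq> y"
    by (auto simp: card_2_iff)
  with sub have "x \<in> {a, b, c, d}" "y \<in> {a, b, c, d}"
    by auto
  with A have "A = {a, b} \<or> A = {a, c} \<or> A = {a, d} \<or> A = {c, d} \<or> A = {b, d} \<or> A = {b, c}"
    by (elim insertE emptyE) (simp_all add: insert_commute)
  moreover have compl: "nbrs G v - {a, b} = {c, d}" "nbrs G v - {a, c} = {b, d}" "nbrs G v - {a, d} = {b, c}"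
    using N \<open>distinct [a, b, c, d]\<close> by auto
  ultimately show thesis
    using that[unfolded compl] by blast
qed

lemma valid_split_degree_four_wlog:
  assumes N: "nbrs G v = {a, b, c, d}" and "distinct [a, b, c, d]" and "valid_split G v A"
    and compl: "\<And>B. B \<subseteq> nbrs G v \<Longrightarrow> P (split_vertex G v B) \<Longrightarrow>
      P (split_vertex G v (nbrs G v - B))"
    and ab: "P (split_vertex G v {a, b})" and ac: "P (split_vertex G v {a, c})"
    and ad: "P (split_vertex G v {a, d})"
  shows "P (split_vertex G v A)"
proof -
  have "{a, b} \<subseteq> nbrs G v" "{a, c} \<subseteq> nbrs G v" "{a, d} \<subseteq> nbrs G v"
    using N by auto
  then have "P (split_vertex G v (nbrs G v - {a, b}))" "P (split_vertex G v (nbrs G v - {a, c}))"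
    "P (split_vertex G v (nbrs G v - {a, d}))"
    using compl ab ac ad by blast+
  with ab ac ad show ?thesis
    by (cases rule: valid_split_degree_four_cases[OF assms(1-3)]) simp_all
qed

section \<open>Checking a minor model\<close>

lemma is_minor_by_enumeration:
  fixes M :: "'b sgraph" and G :: "'a sgraph" and \<phi> :: "'b \<Rightarrow> 'a set"
  assumes "verts M \<subseteq> set VM"
    and "\<And>x y. {x, y} \<in> edges M \<Longrightarrow> (x, y) \<in> set EM \<or> (y, x) \<in> set EM"
    and "list_all (\<lambda>x. connected_set G (\<phi> x)) VM"
    and "list_all (\<lambda>x. list_all (\<lambda>y. x = y \<or> \<phi> x \<inter> \<phi> y = {}) VM) VM"
    and "list_all (\<lambda>(x, y). \<exists>u\<in>\<phi> x. \<exists>w\<in>\<phi> y. {u, w} \<in> edges G) EM"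
  shows "is_minor M G"
  unfolding is_minor_def
proof (intro exI[of _ \<phi>] conjI ballI impI)
  fix x assume "x \<in> verts M"
  with assms(1,3) show "connected_set G (\<phi> x)"
    by (auto simp: list_all_iff)
next
  fix x y assume "x \<in> verts M" "y \<in> verts M" "x \<noteq> y"
  with assms(1,4) show "\<phi> x \<inter> \<phi> y = {}"
    unfolding list_all_iff by blast
next
  fix x y assume "{x, y} \<in> edges M"
  with assms(2) consider "(x, y) \<in> set EM" | "(y, x) \<in> set EM"
    by blast
  then show "\<exists>u\<in>\<phi> x. \<exists>w\<in>\<phi> y. {u, w} \<in> edges G"
    using assms(5) by cases (fastforce simp: list_all_iff insert_commute)+
qed

definition branch_sets :: "('b \<times> 'a set) list \<Rightarrow> 'b \<Rightarrow> 'a set" where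
  "branch_sets L x = (case map_of L x of Some S \<Rightarrow> S | None \<Rightarrow> {})"

lemma connected_set_singleton [simp]: "connected_set G {x} \<longleftrightarrow> x \<in> verts G"
  by (auto simp: connected_set_def)

lemma connected_set_edge:
  assumes "{x, y} \<in> edges G" and "x \<in> verts G" and "y \<in> verts G"
  shows "connected_set G {x, y}"
proof -
  let ?R = "{(a, b). a \<in> {x, y} \<and> b \<in> {x, y} \<and> {a, b} \<in> edges G}"
  have "(x, y) \<in> ?R" "(y, x) \<in> ?R"
    using assms(1) by (auto simp: insert_commute)
  then have "(u, w) \<in> ?R\<^sup>*" if "u \<in> {x, y}" "w \<in> {x, y}" for u w
    using that by auto
  with assms(2,3) show ?thesis
    by (auto simp: connected_set_def)
qed

definition F4_edge_list :: "(fvert \<times> fvert) list" where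
  "F4_edge_list =
    [(f 1, fj 1 1), (f 2, fj 2 1), (f 1, fj 1 2), (f 2, fj 2 2), (f 1, fj 1 4), (f 2, fj 2 4),
     (fj 1 3, fj 1 1), (fj 2 3, fj 2 1), (fj 1 3, fj 1 2), (fj 2 3, fj 2 2),
     (fj 1 3, fj 1 4), (fj 2 3, fj 2 4),
     (fj 1 1, fj 2 4), (fj 1 2, fj 2 3), (fj 1 3, fj 2 2), (fj 1 4, fj 2 1)]"

lemma F4_verts_enumerated:
  "verts F4 \<subseteq> set [f 1, f 2, fj 1 1, fj 1 2, fj 1 3, fj 1 4, fj 2 1, fj 2 2, fj 2 3, fj 2 4]"
  by (auto simp: F4_def verts_def)

lemma F4_edges_enumerated:
  "{x, y} \<in> edges F4 \<Longrightarrow> (x, y) \<in> set F4_edge_list \<or> (y, x) \<in> set F4_edge_list"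
  unfolding F4_def edges_def snd_conv F4_edge_list_def
  by (elim UnE CollectE exE conjE; simp add: doubleton_eq_iff; (elim disjE conjE)?; simp)

definition K34_edge_list :: "((nat + nat) \<times> (nat + nat)) list" where
  "K34_edge_list =
    [(Inl 0, Inr 0), (Inl 0, Inr 1), (Inl 0, Inr 2), (Inl 0, Inr 3),
     (Inl 1, Inr 0), (Inl 1, Inr 1), (Inl 1, Inr 2), (Inl 1, Inr 3),
     (Inl 2, Inr 0), (Inl 2, Inr 1), (Inl 2, Inr 2), (Inl 2, Inr 3)]"

lemma K34_verts_enumerated: "verts K34 \<subseteq> set [Inl 0, Inl 1, Inl 2, Inr 0, Inr 1, Inr 2, Inr 3]"
  by (auto simp: K34_def verts_def)

lemma K34_edges_enumerated:
  assumes "{x, y} \<in> edges K34"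
  shows "(x, y) \<in> set K34_edge_list \<or> (y, x) \<in> set K34_edge_list"
proof -
  obtain i j where e: "{x, y} = {Inl i, Inr j}" "i < 3" "j < 4"
    using assms by (auto simp: K34_def edges_def)
  have "i = 0 \<or> i = 1 \<or> i = 2" "j = 0 \<or> j = 1 \<or> j = 2 \<or> j = 3"
    using e by auto
  moreover have "(x = Inl i \<and> y = Inr j) \<or> (x = Inr j \<and> y = Inl i)"
    using e(1) by (simp add: doubleton_eq_iff)
  ultimately show ?thesis
    unfolding K34_edge_list_def by (elim disjE conjE; simp)
qed

section \<open>The graph E20 and its index symmetries\<close>

lemma E20_verts: "verts E20 = {e0, e2, e4, e1 1, e1 2, e1 3, e3 1, e3 2, e3 3}"
  by (auto simp: E20_def verts_def)

lemma E20_edges: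
  "edges E20 = {{e0, e2}, {e0, e1 1}, {e0, e1 2}, {e0, e1 3},
     {e1 1, e1 2}, {e1 2, e1 3}, {e1 3, e1 1},
     {e1 1, e3 1}, {e1 2, e3 2}, {e1 3, e3 3},
     {e2, e3 1}, {e2, e3 2}, {e2, e3 3}, {e4, e3 1}, {e4, e3 2}, {e4, e3 3}}"
  by (simp only: E20_def edges_def snd_conv Setcompr_eq_image image_insert image_empty
      Un_insert_left Un_empty_left insert_commute)

lemma nbrs_E20:
  "nbrs E20 e0 = {e2, e1 1, e1 2, e1 3}"
  "nbrs E20 (e1 1) = {e0, e1 2, e1 3, e3 1}"
  "nbrs E20 e2 = {e0, e3 1, e3 2, e3 3}"
  "i \<in> {1, 2, 3} \<Longrightarrow> nbrs E20 (e3 i) = {e1 i, e2, e4}"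
  "nbrs E20 e4 = {e3 1, e3 2, e3 3}"
  by (auto simp: nbrs_def E20_verts E20_edges doubleton_eq_iff)

lemma distinct_nbrs_E20:
  "distinct [e2, e1 1, e1 2, e1 3]" "distinct [e0, e1 2, e1 3, e3 1]" "distinct [e0, e3 1, e3 2, e3 3]"
  by simp_all

fun swap_indices :: "nat \<Rightarrow> nat \<Rightarrow> evert \<Rightarrow> evert" where
  "swap_indices i j (e1 k) = e1 (transpose i j k)"
| "swap_indices i j (e3 k) = e3 (transpose i j k)"
| "swap_indices i j x = x"

lemma swap_indices_involutory [simp]: "swap_indices i j (swap_indices i j x) = x"
  by (induction i j x rule: swap_indices.induct) auto

lemma inj_swap_indices: "inj (swap_indices i j)"
  by (metis injI swap_indices_involutory)

lemma relabel_swap_indices_E20: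
  assumes "i \<in> {1, 2, 3}" and "j \<in> {1, 2, 3}"
  shows "relabel (swap_indices i j) E20 = E20"
proof (rule relabel_involution_eq)
  fix x assume "x \<in> verts E20"
  with assms show "swap_indices i j x \<in> verts E20"
    by (auto simp: E20_verts transpose_def)
next
  fix e assume "e \<in> edges E20"
  with assms show "swap_indices i j ` e \<in> edges E20"
    unfolding E20_edges by (elim insertE emptyE; simp add: transpose_def doubleton_eq_iff)
qed simp

lemma is_minor_split_E20_swap_indices:
  assumes "i \<in> {1, 2, 3}" and "j \<in> {1, 2, 3}" and "is_minor M (split_vertex E20 v A)"
  shows "is_minor M (split_vertex E20 (swap_indices i j v) (swap_indices i j ` A))"
proof -
  have "inj (map_sum (swap_indices i j) id)"
    by (simp add: sum.inj_map inj_swap_indices)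
  then have "is_minor M (relabel (map_sum (swap_indices i j) id) (split_vertex E20 v A))"
    using assms(3) by (rule is_minor_relabel[OF inj_on_subset[OF _ subset_UNIV]])
  then show ?thesis
    using split_vertex_relabel[OF inj_swap_indices, of i j E20 v A]
    by (simp add: relabel_swap_indices_E20[OF assms(1,2)])
qed

section \<open>Splits of E20\<close>

lemmas minor_witness_simps =
  branch_sets_def E20_verts E20_edges nbrs_def doubleton_eq_iff F4_edge_list_def K34_edge_list_def

text \<open>In the F4 models every branch set is a single vertex; in the K34 models two branch sets
  contract the edges \<open>e1 i e3 i\<close> and a third contracts a new vertex with one of its neighbours.\<close>

lemma F4_minor_split_E20_e0_base: "is_minor F4 (split_vertex E20 e0 {e2, e1 1})"
  by (rule is_minor_by_enumeration[OF F4_verts_enumerated F4_edges_enumerated,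
        where \<phi> = "branch_sets [(f 1, {Inl e4}), (f 2, {Inr True}),
          (fj 1 1, {Inl (e3 2)}), (fj 1 2, {Inl (e3 1)}), (fj 1 3, {Inl e2}), (fj 1 4, {Inl (e3 3)}),
          (fj 2 1, {Inl (e1 3)}), (fj 2 2, {Inr False}), (fj 2 3, {Inl (e1 1)}), (fj 2 4, {Inl (e1 2)})]"])
     (simp_all add: minor_witness_simps)

lemma F4_minor_split_E20_e11_base: "is_minor F4 (split_vertex E20 (e1 1) {e0, e1 2})"
  by (rule is_minor_by_enumeration[OF F4_verts_enumerated F4_edges_enumerated,
        where \<phi> = "branch_sets [(f 1, {Inl e4}), (f 2, {Inr False}),
          (fj 1 1, {Inl (e3 1)}), (fj 1 2, {Inl (e3 3)}), (fj 1 3, {Inl e2}), (fj 1 4, {Inl (e3 2)}),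
          (fj 2 1, {Inl (e1 2)}), (fj 2 2, {Inl e0}), (fj 2 3, {Inl (e1 3)}), (fj 2 4, {Inr True})]"])
     (simp_all add: minor_witness_simps)

lemma K34_minor_split_E20_e11_base: "is_minor K34 (split_vertex E20 (e1 1) {e0, e3 1})"
  by (rule is_minor_by_enumeration[OF K34_verts_enumerated K34_edges_enumerated,
        where \<phi> = "branch_sets [(Inl 0, {Inl (e1 2), Inl (e3 2)}), (Inl 1, {Inl (e1 3), Inl (e3 3)}),
          (Inl 2, {Inl (e3 1), Inr False}),
          (Inr 0, {Inl e0}), (Inr 1, {Inl e2}), (Inr 2, {Inl e4}), (Inr 3, {Inr True})]"])
     (simp_all add: minor_witness_simps connected_set_edge)

lemma K34_minor_split_E20_e2_base: "is_minor K34 (split_vertex E20 e2 {e0, e3 1})"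
  by (rule is_minor_by_enumeration[OF K34_verts_enumerated K34_edges_enumerated,
        where \<phi> = "branch_sets [(Inl 0, {Inl (e1 2), Inl (e3 2)}), (Inl 1, {Inl (e1 3), Inl (e3 3)}),
          (Inl 2, {Inl (e3 1), Inr False}),
          (Inr 0, {Inl e0}), (Inr 1, {Inl e4}), (Inr 2, {Inl (e1 1)}), (Inr 3, {Inr True})]"])
     (simp_all add: minor_witness_simps connected_set_edge)

lemma F4_minor_split_E20_e0:
  assumes "valid_split E20 e0 A"
  shows "is_minor F4 (split_vertex E20 e0 A)"
proof (rule valid_split_degree_four_wlog[where P = "is_minor F4",
      OF nbrs_E20(1) distinct_nbrs_E20(1) assms is_minor_split_vertex_complement])
  show "is_minor F4 (split_vertex E20 e0 {e2, e1 1})"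
    by (fact F4_minor_split_E20_e0_base)
  then show "is_minor F4 (split_vertex E20 e0 {e2, e1 2})"
    and "is_minor F4 (split_vertex E20 e0 {e2, e1 3})"
    using is_minor_split_E20_swap_indices[of 1 2] is_minor_split_E20_swap_indices[of 1 3] by fastforce+
qed

lemma K34_minor_split_E20_e2:
  assumes "valid_split E20 e2 A"
  shows "is_minor K34 (split_vertex E20 e2 A)"
proof (rule valid_split_degree_four_wlog[where P = "is_minor K34",
      OF nbrs_E20(3) distinct_nbrs_E20(3) assms is_minor_split_vertex_complement])
  show "is_minor K34 (split_vertex E20 e2 {e0, e3 1})"
    by (fact K34_minor_split_E20_e2_base)
  then show "is_minor K34 (split_vertex E20 e2 {e0, e3 2})"
    and "is_minor K34 (split_vertex E20 e2 {e0, e3 3})"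
    using is_minor_split_E20_swap_indices[of 1 2] is_minor_split_E20_swap_indices[of 1 3] by fastforce+
qed

lemma K34_or_F4_minor_split_E20_e11:
  assumes "valid_split E20 (e1 1) A"
  shows "is_minor K34 (split_vertex E20 (e1 1) A) \<or> is_minor F4 (split_vertex E20 (e1 1) A)"
proof (rule valid_split_degree_four_wlog[OF nbrs_E20(2) distinct_nbrs_E20(2) assms])
  show "is_minor K34 (split_vertex E20 (e1 1) {e0, e1 2}) \<or>
      is_minor F4 (split_vertex E20 (e1 1) {e0, e1 2})"
    using F4_minor_split_E20_e11_base by simp
  have "is_minor F4 (split_vertex E20 (e1 1) {e0, e1 3})"
    using is_minor_split_E20_swap_indices[of 2 3, OF _ _ F4_minor_split_E20_e11_base] by simp
  then show "is_minor K34 (split_vertex E20 (e1 1) {e0, e1 3}) \<or>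
      is_minor F4 (split_vertex E20 (e1 1) {e0, e1 3})"
    by simp
  show "is_minor K34 (split_vertex E20 (e1 1) {e0, e3 1}) \<or>
      is_minor F4 (split_vertex E20 (e1 1) {e0, e3 1})"
    using K34_minor_split_E20_e11_base by simp
qed (metis is_minor_split_vertex_complement)

lemma K34_or_F4_minor_split_E20_e1:
  assumes "i \<in> {1, 2, 3}" and "valid_split E20 (e1 i) A"
  shows "is_minor K34 (split_vertex E20 (e1 i) A) \<or> is_minor F4 (split_vertex E20 (e1 i) A)"
proof -
  let ?\<tau> = "swap_indices 1 i"
  have "valid_split (relabel ?\<tau> E20) (?\<tau> (e1 i)) (?\<tau> ` A)"
    using valid_split_relabel[OF inj_swap_indices assms(2)] .
  then have "valid_split E20 (e1 1) (?\<tau> ` A)"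
    using assms(1) by (simp add: relabel_swap_indices_E20)
  then have "is_minor K34 (split_vertex E20 (e1 1) (?\<tau> ` A)) \<or>
      is_minor F4 (split_vertex E20 (e1 1) (?\<tau> ` A))"
    by (rule K34_or_F4_minor_split_E20_e11)
  moreover have swap_back: "is_minor M (split_vertex E20 (e1 i) A)"
    if "is_minor M (split_vertex E20 (e1 1) (?\<tau> ` A))" for M
  proof -
    have "is_minor M (split_vertex E20 (?\<tau> (e1 1)) (?\<tau> ` ?\<tau> ` A))"
      using is_minor_split_E20_swap_indices[of 1 i, OF _ assms(1) that] by simp
    then show ?thesis
      by (simp add: image_image)
  qed
  ultimately show ?thesis
    using swap_back[of K34] swap_back[of F4] by blast
qed

theorem lemma4p2:
  fixes v :: evert and A :: "evert set"
  assumes "valid_split E20 v A"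
  shows "is_minor K34 (split_vertex E20 v A) \<or> is_minor F4 (split_vertex E20 v A)"
proof -
  have "v \<in> verts E20"
    using assms by (simp add: valid_split_def)
  then consider "v = e0" | "v = e2" | i where "i \<in> {1, 2, 3}" "v = e1 i"
    | "card (nbrs E20 v) \<le> 3"
    by (auto simp: E20_verts nbrs_E20 card_insert_le_m1)
  then show ?thesis
  proof cases
    case 1
    with assms show ?thesis by (simp add: F4_minor_split_E20_e0)
  next
    case 2
    with assms show ?thesis by (simp add: K34_minor_split_E20_e2)
  next
    case 3
    with assms show ?thesis by (simp add: K34_or_F4_minor_split_E20_e1)
  next
    case 4
    with valid_split_card_nbrs[OF assms] show ?thesis by simp
  qed
qed

end
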